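(* Fix an integer $L\ge 1$, positive integers $N_1,\dots,N_{L+1},K$, and set $\alpha=N_1/K$, $\beta_\ell=N_{\ell+1}/N_\ell$ for $\ell=1,\dots,L$. Let $\mathcal{P}_{\mathsf X}$ and $\mathcal{P}_{\mathsf H^{(\ell)}}$ ($\ell=1,\dots,L$) be probability densities on $\mathbb{R}$, let $\mathcal{P}(x^{(\ell+1)}\mid z^{(\ell)})$ ($1\le \ell<L$) be transition densities, and let $\mathcal{P}(y\mid z^{(L)})$ be the output transition density. Define the constants $\chi_h^{(\ell)}=\int h^2\mathcal{P}_{\mathsf H^{(\ell)}}(h)\,dh$, $\chi_x^{(1)}=\int x^2\mathcal{P}_{\mathsf X}(x)\,dx$, and recursively $\chi_z^{(\ell)}=N_\ell\chi_x^{(\ell)}\chi_h^{(\ell)}$, $\chi_x^{(\ell)}=\int (x^{(\ell)})^2\mathcal{P}(x^{(\ell)}\mid z^{(\ell-1)})\mathcal{N}(z^{(\ell-1)}\mid 0,\chi_z^{(\ell-1)})\,dz^{(\ell-1)}dx^{(\ell)}$ for $\ell>1$. (A) The state-evolution (SE) equations in the unknowns $\{q_x^{(\ell)},q_h^{(\ell)},q_z^{(\ell)},V^{(\ell)},\Sigma^{(x,\ell)},\Sigma^{(h,\ell)}\}_{\ell=1}^L$ are, for $\ell=1,\dots,L$: $V^{(\ell)}=N_\ell(\chi_h^{(\ell)}\chi_x^{(\ell)}-q_h^{(\ell)}q_x^{(\ell)})$; $q_z^{(L)}=\int \frac{[\int z\,\mathcal{P}(y|z)\mathcal{N}(z\mid\sqrt{\chi_z^{(L)}-V^{(L)}}\xi,V^{(L)})dz]^2}{\int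 \mathcal{P}(y|z)\mathcal{N}(z\mid\sqrt{\chi_z^{(L)}-V^{(L)}}\xi,V^{(L)})dz}\,\mathrm{D}\xi\,dy$; for $\ell<L$: $q_z^{(\ell)}=\int \frac{[\int z^{(\ell)}\mathcal{N}^{(\ell)}_{x|z}(\sqrt{\chi_z^{(\ell)}-V^{(\ell)}}\xi,V^{(\ell)},\zeta,\Sigma^{(x,\ell+1)})dx^{(\ell+1)}dz^{(\ell)}]^2}{\int \mathcal{N}^{(\ell)}_{x|z}(\sqrt{\chi_z^{(\ell)}-V^{(\ell)}}\xi,V^{(\ell)},\zeta,\Sigma^{(x,\ell+1)})dx^{(\ell+1)}dz^{(\ell)}}\,\mathrm{D}\xi\,d\zeta$; $\Sigma^{(x,\ell)}=\frac{N_\ell(\chi_x^{(\ell)}\chi_h^{(\ell)}-q_x^{(\ell)}q_h^{(\ell)})^2}{\beta_\ell q_h^{(\ell)}(q_z^{(\ell)}-N_\ell q_x^{(\ell)}q_h^{(\ell)})}$; $\Sigma^{(h,\ell)}=\frac{\alpha\prod_{l=1}^{\ell-1}\beta_l\,N_\ell(\chi_x^{(\ell)}\chi_h^{(\ell)}-q_x^{(\ell)}q_h^{(\ell)})^2}{q_x^{(\ell)}(q_z^{(\ell)}-N_\ell q_x^{(\ell)}q_h^{(\ell)})}$; $q_x^{(1)}=\int\frac{[\int x\mathcal{P}_{\mathsf X}(x)\mathcal{N}(x|\zeta,\Sigma^{(x,1)})dx]^2}{\int \mathcal{P}_{\mathsf X}(x)\mathcal{N}(x|\zeta,\Sigma^{(x,1)})dx}\,d\zeta$;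 for $\ell>1$: $q_x^{(\ell)}=\int \frac{[\int x^{(\ell)}\mathcal{N}^{(\ell-1)}_{x|z}(\sqrt{\chi_z^{(\ell-1)}-V^{(\ell-1)}}\xi,V^{(\ell-1)},\zeta,\Sigma^{(x,\ell)})dx^{(\ell)}dz^{(\ell-1)}]^2}{\int \mathcal{N}^{(\ell-1)}_{x|z}(\sqrt{\chi_z^{(\ell-1)}-V^{(\ell-1)}}\xi,V^{(\ell-1)},\zeta,\Sigma^{(x,\ell)})dx^{(\ell)}dz^{(\ell-1)}}\,\mathrm{D}\xi\,d\zeta$; $q_h^{(\ell)}=\int\frac{[\int h\mathcal{P}_{\mathsf H^{(\ell)}}(h)\mathcal{N}(h|\zeta,\Sigma^{(h,\ell)})dh]^2}{\int \mathcal{P}_{\mathsf H^{(\ell)}}(h)\mathcal{N}(h|\zeta,\Sigma^{(h,\ell)})dh}\,d\zeta$. (B) The replica fixed-point equations of the MMSE estimator in the unknowns $\{q_x^{(\ell)},q_h^{(\ell)},q_z^{(\ell)},\hat q_x^{(\ell)},\hat q_h^{(\ell)}\}_{\ell=1}^L$ are, for $\ell=1,\dots,L$: $\hat q_x^{(\ell)}=\frac{\beta_\ell q_h^{(\ell)}}{2}\frac{q_z^{(\ell)}-N_\ell q_x^{(\ell)}q_h^{(\ell)}}{N_\ell(\chi_x^{(\ell)}\chi_h^{(\ell)}-q_x^{(\ell)}q_h^{(\ell)})^2}$; $\hat q_h^{(\ell)}=\frac{q_x^{(\ell)}}{2\alpha\prod_{l=1}^{\ell-1}\beta_l}\frac{q_z^{(\ell)}-N_\ell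 q_x^{(\ell)}q_h^{(\ell)}}{N_\ell(\chi_x^{(\ell)}\chi_h^{(\ell)}-q_x^{(\ell)}q_h^{(\ell)})^2}$; $q_h^{(\ell)}=\int\frac{[\int h\mathcal{P}_{\mathsf H^{(\ell)}}(h)\mathcal{N}(h|\zeta,\frac{1}{2\hat q_h^{(\ell)}})dh]^2}{\int \mathcal{P}_{\mathsf H^{(\ell)}}(h)\mathcal{N}(h|\zeta,\frac{1}{2\hat q_h^{(\ell)}})dh}\,d\zeta$; $q_z^{(L)}=\int\frac{[\int z\mathcal{P}(y|z)\mathcal{N}(z|\sqrt{N_Lq_x^{(L)}q_h^{(L)}}\xi,N_L(\chi_x^{(L)}\chi_h^{(L)}-q_x^{(L)}q_h^{(L)}))dz]^2}{\int \mathcal{P}(y|z)\mathcal{N}(z|\sqrt{N_Lq_x^{(L)}q_h^{(L)}}\xi,N_L(\chi_x^{(L)}\chi_h^{(L)}-q_x^{(L)}q_h^{(L)}))dz}\,\mathrm{D}\xi\,dy$; for $\ell<L$: $q_z^{(\ell)}=\int\frac{[\int z^{(\ell)}\mathcal{N}^{(\ell)}_{x|z}(\sqrt{N_\ell q_h^{(\ell)}q_x^{(\ell)}}\xi,N_\ell(\chi_h^{(\ell)}\chi_x^{(\ell)}-q_h^{(\ell)}q_x^{(\ell)}),\zeta,\frac{1}{2\hat q_x^{(\ell+1)}})dx^{(\ell+1)}dz^{(\ell)}]^2}{\int \mathcal{N}^{(\ell)}_{x|z}(\sqrt{N_\ell q_h^{(\ell)}q_x^{(\ell)}}\xi,N_\ell(\chi_h^{(\ell)}\chi_x^{(\ell)}-q_h^{(\ell)}q_x^{(\ell)}),\zeta,\frac{1}{2\hat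 q_x^{(\ell+1)}})dx^{(\ell+1)}dz^{(\ell)}}\,\mathrm{D}\xi\,d\zeta$; $q_x^{(1)}=\int\frac{[\int x\mathcal{P}_{\mathsf X}(x)\mathcal{N}(x|\zeta,\frac{1}{2\hat q_x^{(1)}})dx]^2}{\int \mathcal{P}_{\mathsf X}(x)\mathcal{N}(x|\zeta,\frac{1}{2\hat q_x^{(1)}})dx}\,d\zeta$; for $\ell>1$: $q_x^{(\ell)}=\int\frac{[\int x^{(\ell)}\mathcal{N}^{(\ell-1)}_{x|z}(\sqrt{N_{\ell-1}q_h^{(\ell-1)}q_x^{(\ell-1)}}\xi,N_{\ell-1}(\chi_h^{(\ell-1)}\chi_x^{(\ell-1)}-q_h^{(\ell-1)}q_x^{(\ell-1)}),\zeta,\frac{1}{2\hat q_x^{(\ell)}})dz^{(\ell-1)}dx^{(\ell)}]^2}{\int \mathcal{N}^{(\ell-1)}_{x|z}(\sqrt{N_{\ell-1}q_h^{(\ell-1)}q_x^{(\ell-1)}}\xi,N_{\ell-1}(\chi_h^{(\ell-1)}\chi_x^{(\ell-1)}-q_h^{(\ell-1)}q_x^{(\ell-1)}),\zeta,\frac{1}{2\hat q_x^{(\ell)}})dz^{(\ell-1)}dx^{(\ell)}}\,\mathrm{D}\xi\,d\zeta$. Claim: under the identification $\Sigma^{(x,\ell)}=\frac{1}{2\hat q_x^{(\ell)}}$ and $\Sigma^{(h,\ell)}=\frac{1}{2\hat q_h^{(\ell)}}$ for all $\ell$, the SE equations (A) (with $V^{(\ell)}$ given by its defining equation) coincide with the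 replica fixed-point equations (B); that is, $\{q_x^{(\ell)},q_h^{(\ell)},q_z^{(\ell)},\Sigma^{(x,\ell)},\Sigma^{(h,\ell)}\}$ together with $V^{(\ell)}=N_\ell(\chi_h^{(\ell)}\chi_x^{(\ell)}-q_h^{(\ell)}q_x^{(\ell)})$ solves (A) if and only if $\{q_x^{(\ell)},q_h^{(\ell)},q_z^{(\ell)},\hat q_x^{(\ell)}=1/(2\Sigma^{(x,\ell)}),\hat q_h^{(\ell)}=1/(2\Sigma^{(h,\ell)})\}$ solves (B).
   Context: Notation: $\mathcal{N}(x\mid a,A)=\frac{1}{\sqrt{2\pi A}}\exp(-\frac{(x-a)^2}{2A})$; $\mathrm{D}\xi=\mathcal{N}(\xi\mid 0,1)d\xi$; for $1\le\ell<L$, $\mathcal{N}^{(\ell)}_{x|z}(a,A,b,B)=\mathcal{P}(x^{(\ell+1)}\mid z^{(\ell)})\,\mathcal{N}(z^{(\ell)}\mid a,A)\,\mathcal{N}(x^{(\ell+1)}\mid b,B)$, viewed as a function of $(z^{(\ell)},x^{(\ell+1)})$. Integrals with $d\zeta$ are with respect to Lebesgue measure over $\mathbb{R}$. These equations arise for the multi-layer model $\mathbf{X}^{(\ell+1)}=\phi^{(\ell)}(\mathbf{H}^{(\ell)}\mathbf{X}^{(\ell)},\mathbf{W}^{(\ell)})$, $\mathbf{Y}=\mathbf{X}^{(L+1)}$, with i.i.d. entries $\mathbf{X}^{(1)}\sim\mathcal{P}_{\mathsf X}$, $\mathbf{H}^{(\ell)}\sim\mathcal{P}_{\mathsf H^{(\ell)}}$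 and componentwise transitions; (A) is the state evolution of the ML-BiGAMP algorithm and (B) the replica-symmetric fixed-point equations of the MMSE estimator. All quantities are assumed such that the denominators and square roots appearing are well defined (e.g. $\Sigma^{(x,\ell)},\Sigma^{(h,\ell)},\hat q_x^{(\ell)},\hat q_h^{(\ell)}>0$, $0\le V^{(\ell)}\le\chi_z^{(\ell)}$). *)

theory Defs
  imports "HOL-Analysis.Analysis"
begin

definition gauss :: "real \<Rightarrow> real \<Rightarrow> real \<Rightarrow> real" where
  "gauss x a A = 1 / sqrt (2 * pi * A) * exp (- ((x - a)\<^sup>2) / (2 * A))"

definition int1 :: "(real \<Rightarrow> real) \<Rightarrow> real" where
  "int1 f = (\<integral>x. f x \<partial>lborel)"

definition int2 :: "(real \<Rightarrow> real \<Rightarrow> real) \<Rightarrow> real" where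
  "int2 f = (\<integral>p. f (fst p) (snd p) \<partial>(lborel \<Otimes>\<^sub>M lborel))"

definition is_density :: "(real \<Rightarrow> real) \<Rightarrow> bool" where
  "is_density f \<longleftrightarrow> f \<in> borel_measurable borel \<and> (\<forall>x. 0 \<le> f x)
      \<and> (\<integral>\<^sup>+x. ennreal (f x) \<partial>lborel) = 1"

text \<open>Model data: Ptr l x z is P(x^(l+1) | z^(l)) for 1 <= l < L;
  Pout y z is P(y | z^(L)).\<close>

definition alpha :: "(nat \<Rightarrow> nat) \<Rightarrow> nat \<Rightarrow> real" where
  "alpha N K = real (N 1) / real K"

definition beta :: "(nat \<Rightarrow> nat) \<Rightarrow> nat \<Rightarrow> real" where
  "beta N l = real (N (l + 1)) / real (N l)"

definition chih :: "(nat \<Rightarrow> real \<Rightarrow> real) \<Rightarrow> nat \<Rightarrow> real" where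
  "chih PH l = int1 (\<lambda>h. h\<^sup>2 * PH l h)"

fun chix :: "(nat \<Rightarrow> nat) \<Rightarrow> (real \<Rightarrow> real) \<Rightarrow> (nat \<Rightarrow> real \<Rightarrow> real)
              \<Rightarrow> (nat \<Rightarrow> real \<Rightarrow> real \<Rightarrow> real) \<Rightarrow> nat \<Rightarrow> real" where
  "chix N PX PH Ptr 0 = 0"
| "chix N PX PH Ptr (Suc 0) = int1 (\<lambda>x. x\<^sup>2 * PX x)"
| "chix N PX PH Ptr (Suc (Suc l)) =
     int2 (\<lambda>z x. x\<^sup>2 * Ptr (Suc l) x z *
        gauss z 0 (real (N (Suc l)) * chix N PX PH Ptr (Suc l) * chih PH (Suc l)))"

definition chiz :: "(nat \<Rightarrow> nat) \<Rightarrow> (real \<Rightarrow> real) \<Rightarrow> (nat \<Rightarrow> real \<Rightarrow> real)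
              \<Rightarrow> (nat \<Rightarrow> real \<Rightarrow> real \<Rightarrow> real) \<Rightarrow> nat \<Rightarrow> real" where
  "chiz N PX PH Ptr l = real (N l) * chix N PX PH Ptr l * chih PH l"

definition Nxz :: "(nat \<Rightarrow> real \<Rightarrow> real \<Rightarrow> real) \<Rightarrow> nat \<Rightarrow> real \<Rightarrow> real \<Rightarrow> real \<Rightarrow> real
                     \<Rightarrow> real \<Rightarrow> real \<Rightarrow> real" where
  "Nxz Ptr l a A b B z x = Ptr l x z * gauss z a A * gauss x b B"

definition SE_system where
  "SE_system L N K PX PH Ptr Pout qx qh qz V Sx Sh \<longleftrightarrow>
   (let chx = chix N PX PH Ptr; chz = chiz N PX PH Ptr; chh = chih PH in
   (\<forall>l\<in>{1..L}.
      V l = real (N l) * (chh l * chx l - qh l * qx l)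
    \<and> (l = L \<longrightarrow>
        qz L = int2 (\<lambda>\<xi> y.
           (int1 (\<lambda>z. z * Pout y z * gauss z (sqrt (chz L - V L) * \<xi>) (V L)))\<^sup>2
           / int1 (\<lambda>z. Pout y z * gauss z (sqrt (chz L - V L) * \<xi>) (V L))
           * gauss \<xi> 0 1))
    \<and> (l < L \<longrightarrow>
        qz l = int2 (\<lambda>\<xi> \<zeta>.
           (int2 (\<lambda>z x. z * Nxz Ptr l (sqrt (chz l - V l) * \<xi>) (V l) \<zeta> (Sx (l + 1)) z x))\<^sup>2
           / int2 (\<lambda>z x. Nxz Ptr l (sqrt (chz l - V l) * \<xi>) (V l) \<zeta> (Sx (l + 1)) z x)
           * gauss \<xi> 0 1))
    \<and> Sx l = real (N l) * (chx l * chh l - qx l * qh l)\<^sup>2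
              / (beta N l * qh l * (qz l - real (N l) * qx l * qh l))
    \<and> Sh l = alpha N K * (\<Prod>l'\<in>{1..<l}. beta N l') * real (N l) * (chx l * chh l - qx l * qh l)\<^sup>2
              / (qx l * (qz l - real (N l) * qx l * qh l))
    \<and> (l = 1 \<longrightarrow>
        qx 1 = int1 (\<lambda>\<zeta>.
           (int1 (\<lambda>x. x * PX x * gauss x \<zeta> (Sx 1)))\<^sup>2
           / int1 (\<lambda>x. PX x * gauss x \<zeta> (Sx 1))))
    \<and> (l > 1 \<longrightarrow>
        qx l = int2 (\<lambda>\<xi> \<zeta>.
           (int2 (\<lambda>z x. x * Nxz Ptr (l - 1) (sqrt (chz (l - 1) - V (l - 1)) * \<xi>) (V (l - 1)) \<zeta> (Sx l) z x))\<^sup>2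
           / int2 (\<lambda>z x. Nxz Ptr (l - 1) (sqrt (chz (l - 1) - V (l - 1)) * \<xi>) (V (l - 1)) \<zeta> (Sx l) z x)
           * gauss \<xi> 0 1))
    \<and> qh l = int1 (\<lambda>\<zeta>.
           (int1 (\<lambda>h. h * PH l h * gauss h \<zeta> (Sh l)))\<^sup>2
           / int1 (\<lambda>h. PH l h * gauss h \<zeta> (Sh l)))))"

definition replica_system where
  "replica_system L N K PX PH Ptr Pout qx qh qz qhx qhh \<longleftrightarrow>
   (let chx = chix N PX PH Ptr; chh = chih PH in
   (\<forall>l\<in>{1..L}.
      qhx l = beta N l * qh l / 2 * ((qz l - real (N l) * qx l * qh l)
                 / (real (N l) * (chx l * chh l - qx l * qh l)\<^sup>2))
    \<and> qhh l = qx l / (2 * alpha N K * (\<Prod>l'\<in>{1..<l}. beta N l'))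
               * ((qz l - real (N l) * qx l * qh l)
                 / (real (N l) * (chx l * chh l - qx l * qh l)\<^sup>2))
    \<and> qh l = int1 (\<lambda>\<zeta>.
           (int1 (\<lambda>h. h * PH l h * gauss h \<zeta> (1 / (2 * qhh l))))\<^sup>2
           / int1 (\<lambda>h. PH l h * gauss h \<zeta> (1 / (2 * qhh l))))
    \<and> (l = L \<longrightarrow>
        qz L = int2 (\<lambda>\<xi> y.
           (int1 (\<lambda>z. z * Pout y z * gauss z (sqrt (real (N L) * qx L * qh L) * \<xi>)
                      (real (N L) * (chx L * chh L - qx L * qh L))))\<^sup>2
           / int1 (\<lambda>z. Pout y z * gauss z (sqrt (real (N L) * qx L * qh L) * \<xi>)
                      (real (N L) * (chx L * chh L - qx L * qh L)))
           * gauss \<xi> 0 1))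
    \<and> (l < L \<longrightarrow>
        qz l = int2 (\<lambda>\<xi> \<zeta>.
           (int2 (\<lambda>z x. z * Nxz Ptr l (sqrt (real (N l) * qh l * qx l) * \<xi>)
                   (real (N l) * (chh l * chx l - qh l * qx l)) \<zeta> (1 / (2 * qhx (l + 1))) z x))\<^sup>2
           / int2 (\<lambda>z x. Nxz Ptr l (sqrt (real (N l) * qh l * qx l) * \<xi>)
                   (real (N l) * (chh l * chx l - qh l * qx l)) \<zeta> (1 / (2 * qhx (l + 1))) z x)
           * gauss \<xi> 0 1))
    \<and> (l = 1 \<longrightarrow>
        qx 1 = int1 (\<lambda>\<zeta>.
           (int1 (\<lambda>x. x * PX x * gauss x \<zeta> (1 / (2 * qhx 1))))\<^sup>2
           / int1 (\<lambda>x. PX x * gauss x \<zeta> (1 / (2 * qhx 1)))))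
    \<and> (l > 1 \<longrightarrow>
        qx l = int2 (\<lambda>\<xi> \<zeta>.
           (int2 (\<lambda>z x. x * Nxz Ptr (l - 1) (sqrt (real (N (l - 1)) * qh (l - 1) * qx (l - 1)) * \<xi>)
                   (real (N (l - 1)) * (chh (l - 1) * chx (l - 1) - qh (l - 1) * qx (l - 1)))
                   \<zeta> (1 / (2 * qhx l)) z x))\<^sup>2
           / int2 (\<lambda>z x. Nxz Ptr (l - 1) (sqrt (real (N (l - 1)) * qh (l - 1) * qx (l - 1)) * \<xi>)
                   (real (N (l - 1)) * (chh (l - 1) * chx (l - 1) - qh (l - 1) * qx (l - 1)))
                   \<zeta> (1 / (2 * qhx l)) z x)
           * gauss \<xi> 0 1))))"

end

theory Submission
  imports Defs
begin

text \<open>The correspondence is purely algebraic. Since \<open>\<chi>\<^sub>z = N \<chi>\<^sub>x \<chi>\<^sub>h\<close>, the SE variance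
  \<open>V = N (\<chi>\<^sub>h \<chi>\<^sub>x - q\<^sub>h q\<^sub>x)\<close> leaves \<open>\<chi>\<^sub>z - V = N q\<^sub>x q\<^sub>h\<close>, so the Gaussian kernels in the
  \<open>q\<^sub>z\<close> and \<open>q\<^sub>x\<close> equations of (A) and (B) coincide; and under \<open>\<Sigma> = 1/(2 qhat)\<close> each
  \<open>\<Sigma>\<close>-equation of (A) is the reciprocal of the corresponding \<open>qhat\<close>-equation of (B).\<close>

lemma eq_divide_iff_half_inverse:
  fixes x A B :: "'a::field_char_0"
  assumes "x \<noteq> 0"
  shows "x = A / B \<longleftrightarrow> 1 / (2 * x) = B / (2 * A)"
  using assms by (cases "A = 0 \<or> B = 0") (auto simp: field_simps)

lemma half_inverse_half_inverse:
  fixes x :: "'a::field_char_0"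
  shows "1 / (2 * (1 / (2 * x))) = x"
  by (cases "x = 0") (auto simp: field_simps)

lemma variance_eq_iff_precision_x:
  fixes S n c b q d :: "'a::field_char_0"
  assumes "S \<noteq> 0"
  shows "S = n * c\<^sup>2 / (b * q * d) \<longleftrightarrow> 1 / (2 * S) = b * q / 2 * (d / (n * c\<^sup>2))"
  by (subst eq_divide_iff_half_inverse[OF assms]) (simp add: field_simps)

lemma variance_eq_iff_precision_h:
  fixes S a p n c q d :: "'a::field_char_0"
  assumes "S \<noteq> 0"
  shows "S = a * p * n * c\<^sup>2 / (q * d) \<longleftrightarrow> 1 / (2 * S) = q / (2 * a * p) * (d / (n * c\<^sup>2))"
  by (subst eq_divide_iff_half_inverse[OF assms]) (simp add: field_simps)

lemma chiz_minus_variance: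
  "chiz N PX PH Ptr l - real (N l) * (chih PH l * chix N PX PH Ptr l - qh * qx)
     = real (N l) * qx * qh"
  by (simp add: chiz_def algebra_simps)

theorem proposition3:
  fixes L K :: nat and N :: "nat \<Rightarrow> nat"
    and PX :: "real \<Rightarrow> real" and PH :: "nat \<Rightarrow> real \<Rightarrow> real"
    and Ptr :: "nat \<Rightarrow> real \<Rightarrow> real \<Rightarrow> real" and Pout :: "real \<Rightarrow> real \<Rightarrow> real"
    and qx qh qz Sx Sh :: "nat \<Rightarrow> real"
  assumes "L \<ge> 1" and "K > 0" and "\<And>l. l \<in> {1..L+1} \<Longrightarrow> N l > 0"
    and "is_density PX"
    and "\<And>l. l \<in> {1..L} \<Longrightarrow> is_density (PH l)"
    and "\<And>l z. l \<in> {1..<L} \<Longrightarrow> is_density (\<lambda>x. Ptr l x z)"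
    and "\<And>z. is_density (\<lambda>y. Pout y z)"
    and "\<And>l. l \<in> {1..L} \<Longrightarrow> Sx l > 0"
    and "\<And>l. l \<in> {1..L} \<Longrightarrow> Sh l > 0"
    and "\<And>l. l \<in> {1..L} \<Longrightarrow>
           0 \<le> real (N l) * (chih PH l * chix N PX PH Ptr l - qh l * qx l)"
    and "\<And>l. l \<in> {1..L} \<Longrightarrow>
           real (N l) * (chih PH l * chix N PX PH Ptr l - qh l * qx l) \<le> chiz N PX PH Ptr l"
  shows "SE_system L N K PX PH Ptr Pout qx qh qz
           (\<lambda>l. real (N l) * (chih PH l * chix N PX PH Ptr l - qh l * qx l)) Sx Sh
         \<longleftrightarrow> replica_system L N K PX PH Ptr Pout qx qh qz
           (\<lambda>l. 1 / (2 * Sx l)) (\<lambda>l. 1 / (2 * Sh l))"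
  unfolding SE_system_def replica_system_def Let_def
proof (rule ball_cong[OF refl], goal_cases)
  case (1 l)
  have "Sx l \<noteq> 0" "Sh l \<noteq> 0"
    using assms(8,9)[OF 1] by auto
  note Sigma_eqs = variance_eq_iff_precision_x[OF this(1)] variance_eq_iff_precision_h[OF this(2)]
  \<comment> \<open>(B) writes the same products with their factors in different orders\<close>
  have mean_variance_commute:
    "\<And>j. real (N j) * qh j * qx j = real (N j) * qx j * qh j"
    "\<And>j. real (N j) * (chix N PX PH Ptr j * chih PH j - qx j * qh j)
       = real (N j) * (chih PH j * chix N PX PH Ptr j - qh j * qx j)"
    by (simp_all add: ac_simps)
  show ?case
    by (simp only: Sigma_eqs chiz_minus_variance mean_variance_commute
        half_inverse_half_inverse) blast
qed

end
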